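(* Let $q\ge2$, $d\ge1$ be integers, let $f\colon\mathbb{N}_0\to\mathbb{U}$ be $q$-multiplicative and let $c>0$. Then the estimate $$\sup_{p\in\mathbb{R}[x],\ \deg p\le d}\Big|\frac{1}{q^L}\sum_{n=0}^{q^L-1}f(n)e(p(n))\Big|\ll q^{-cL}\qquad(L\ge0)$$ holds if and only if $$\sup_{M\ge0}\ \sup_{p\in\mathbb{R}[x],\ \deg p\le d}\Big|\frac1N\sum_{n=0}^{N-1}f(n+M)e(p(n))\Big|\ll N^{-c}\qquad(N\ge1).$$
   Context: $\mathbb{N}_0=\{0,1,\dots\}$, $\mathbb{U}=\{z\in\mathbb{C}:|z|=1\}$, $e(t)=e^{2\pi i t}$. $f$ is $q$-multiplicative if $f(m+n)=f(m)f(n)$ whenever $t,m,n\ge0$, $m<q^t$, $q^t\mid n$. $X\ll Y$ means $|X|\le CY$ for a constant $C$ independent of $L$, $N$, $M$, $p$. *)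

theory Defs
  imports "HOL-Computational_Algebra.Polynomial" "HOL-Analysis.Analysis"
begin

definition e :: "real \<Rightarrow> complex" where
  "e t = exp (2 * of_real pi * \<i> * of_real t)"

definition q_multiplicative :: "nat \<Rightarrow> (nat \<Rightarrow> complex) \<Rightarrow> bool" where
  "q_multiplicative q f \<longleftrightarrow>
     (\<forall>t m n. m < q ^ t \<longrightarrow> q ^ t dvd n \<longrightarrow> f (m + n) = f m * f n)"

end

theory Submission
  imports Defs
begin

(* By q-multiplicativity, a sum over an aligned block [A, A + q^J) with q^J dvd A is f A times a
   complete sum of length q^J twisted by the shifted polynomial p(x + A), which has the same
   degree; so complete sums of length q^J, bounded by C q^((1-c)J), control all aligned blocks.
   An arbitrary interval sum of length N < q^(K+1) is the difference of two sums starting at a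
   multiple of q^K, and expanding their lengths in base q bounds each by 1 + q (B_0 + ... + B_K),
   B_J = C q^((1-c)J).  For c < 1 this geometric series is dominated by its top term, of order
   N^(1-c).  The case c >= 1 cannot occur: by Parseval over the linear phases k n / q^L, some
   complete sum of length q^L has modulus at least q^(L/2).  The converse direction is the
   special case M = 0, N = q^L. *)

lemma norm_e [simp]: "norm (e t) = 1"
  by (simp add: e_def norm_exp_eq_Re)

lemma e_add: "e (a + b) = e a * e b"
  by (simp add: e_def ring_distribs exp_add[symmetric])

lemma e_of_nat_mult: "e (real k * t) = e t ^ k"
proof -
  have "e (real k * t) = exp (of_nat k * (2 * of_real pi * \<i> * of_real t))"
    by (simp add: e_def mult_ac)
  then show ?thesis by (simp add: exp_of_nat_mult e_def)
qed

lemma cnj_e: "cnj (e t) = e (- t)"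
  by (simp add: e_def exp_cnj)

lemma e_eq_1_iff: "e t = 1 \<longleftrightarrow> t \<in> \<int>"
proof
  assume "e t = 1"
  then obtain n :: int where "Im (2 * of_real pi * \<i> * of_real t) = of_int (2 * n) * pi"
    unfolding e_def exp_eq_1 by blast
  then have "t = of_int n" by simp
  then show "t \<in> \<int>" by simp
next
  assume "t \<in> \<int>"
  then obtain k where "t = of_int k" by (auto elim: Ints_cases)
  then have "e t = exp ((2 * of_int k * pi) * \<i>)"
    by (simp add: e_def mult_ac)
  also have "\<dots> = 1" by (rule exp_integer_2pi) simp
  finally show "e t = 1" .
qed

lemma sum_e_orthogonal:
  fixes Q n m :: nat
  assumes "n < Q" "m < Q"
  shows "(\<Sum>k<Q. e (real k * ((real n - real m) / real Q))) = (if n = m then of_nat Q else 0)"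
proof (cases "n = m")
  case True then show ?thesis by (simp add: e_def)
next
  case False
  define w where "w = e ((real n - real m) / real Q)"
  have "w \<noteq> 1"
  proof
    assume "w = 1"
    then obtain k :: int where k: "(real n - real m) / real Q = of_int k"
      by (auto simp: w_def e_eq_1_iff elim: Ints_cases)
    with assms have "real n - real m = real Q * of_int k" "\<bar>real n - real m\<bar> < real Q"
      by (auto simp: field_simps)
    then have "real Q * \<bar>of_int k\<bar> < real Q * 1" by (simp add: abs_mult)
    then have "k = 0" using assms by (simp only: mult_less_cancel_left_pos)
    with k False assms show False by simp
  qed
  have "w ^ Q = e (real Q * ((real n - real m) / real Q))"
    unfolding w_def by (rule e_of_nat_mult[symmetric])
  also have "\<dots> = 1" using assms by (simp add: e_eq_1_iff)
  finally have "w ^ Q = 1" .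
  have "(\<Sum>k<Q. e (real k * ((real n - real m) / real Q))) = (\<Sum>k<Q. w ^ k)"
    by (simp only: w_def e_of_nat_mult)
  also have "\<dots> = 0" using \<open>w \<noteq> 1\<close> \<open>w ^ Q = 1\<close> by (simp add: sum_gp_strict)
  finally show ?thesis using False by simp
qed

lemma parseval_e:
  fixes f :: "nat \<Rightarrow> complex" and Q :: nat
  shows "(\<Sum>k<Q. (norm (\<Sum>n<Q. f n * e (real k / real Q * real n)))^2)
    = real Q * (\<Sum>n<Q. (norm (f n))^2)"
proof -
  have "complex_of_real (\<Sum>k<Q. (norm (\<Sum>n<Q. f n * e (real k / real Q * real n)))^2)
      = (\<Sum>k<Q. (\<Sum>n<Q. f n * e (real k / real Q * real n)) * cnj (\<Sum>m<Q. f m * e (real k / real Q * real m)))"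
    by (simp only: of_real_sum complex_norm_square)
  also have "\<dots> = (\<Sum>k<Q. \<Sum>n<Q. \<Sum>m<Q. f n * cnj (f m) * e (real k * ((real n - real m) / real Q)))"
  proof (intro sum.cong refl)
    fix k
    have e_diff: "e (real k / real Q * real n) * e (- (real k / real Q * real m))
        = e (real k * ((real n - real m) / real Q))" for n m
      by (simp flip: e_add add: right_diff_distrib diff_divide_distrib)
    show "(\<Sum>n<Q. f n * e (real k / real Q * real n)) * cnj (\<Sum>m<Q. f m * e (real k / real Q * real m))
        = (\<Sum>n<Q. \<Sum>m<Q. f n * cnj (f m) * e (real k * ((real n - real m) / real Q)))"
      by (simp only: cnj_sum sum_product complex_cnj_mult cnj_e flip: e_diff) (simp only: mult_ac)
  qed
  also have "\<dots> = (\<Sum>n<Q. \<Sum>m<Q. f n * cnj (f m) * (\<Sum>k<Q. e (real k * ((real n - real m) / real Q))))"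
    by (subst sum.swap, rule sum.cong, simp, subst sum.swap, simp add: sum_distrib_left)
  also have "\<dots> = (\<Sum>n<Q. \<Sum>m<Q. f n * cnj (f m) * (if n = m then of_nat Q else 0))"
    by (intro sum.cong refl, subst sum_e_orthogonal) auto
  also have "\<dots> = complex_of_real (real Q * (\<Sum>n<Q. (norm (f n))^2))"
    by (simp add: if_distrib sum_distrib_left mult_ac flip: complex_norm_square cong: if_cong)
  finally show ?thesis using of_real_eq_iff by blast
qed

lemma exists_large_linear_sum:
  fixes f :: "nat \<Rightarrow> complex"
  assumes "Q > 0" and "\<And>n. n < Q \<Longrightarrow> norm (f n) = 1"
  shows "\<exists>k<Q. real Q \<le> (norm (\<Sum>n<Q. f n * e (real k / real Q * real n)))^2"
proof (rule ccontr)
  assume "\<not> ?thesis"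
  then have "(\<Sum>k<Q. (norm (\<Sum>n<Q. f n * e (real k / real Q * real n)))^2) < (\<Sum>k<Q. real Q)"
    using assms(1) by (intro sum_strict_mono) (auto simp: not_le)
  also have "\<dots> = (\<Sum>k<Q. (norm (\<Sum>n<Q. f n * e (real k / real Q * real n)))^2)"
    using assms(2) by (simp only: parseval_e) simp
  finally show False by simp
qed

lemma power_saving_exponent_lt_1:
  fixes f :: "nat \<Rightarrow> complex" and q d :: nat and C c :: real
  assumes "q \<ge> 2" and "d \<ge> 1" and "\<And>n. norm (f n) = 1"
    and bound: "\<And>L p. degree p \<le> d \<Longrightarrow>
      norm (\<Sum>n<q^L. f n * e (poly p (real n))) \<le> C * real (q^L) powr (1 - c)"
  shows "c < 1"
proof (rule ccontr)
  assume "\<not> c < 1"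
  have "real (q^L) \<le> C^2" for L
  proof -
    define Q where "Q = q^L"
    have "Q > 0" using assms(1) by (simp add: Q_def)
    then obtain k where "real Q \<le> (norm (\<Sum>n<Q. f n * e (real k / real Q * real n)))^2"
      using exists_large_linear_sum assms(3) by blast
    also have "\<dots> \<le> C^2"
    proof (rule power_mono)
      have "norm (\<Sum>n<Q. f n * e (real k / real Q * real n)) \<le> C * real Q powr (1 - c)"
        using bound[of "[:0, real k / real Q:]" L] assms(2) by (simp add: Q_def mult_ac)
      also have "\<dots> \<le> C"
      proof -
        have "C \<ge> 1" using bound[of 0 0] assms(3)[of 0] by (simp add: norm_mult)
        moreover have "real Q powr (1 - c) \<le> 1"
          using \<open>Q > 0\<close> \<open>\<not> c < 1\<close> powr_mono[of "1 - c" 0 "real Q"] by simp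
        ultimately show ?thesis by (simp add: mult_left_le)
      qed
      finally show "norm (\<Sum>n<Q. f n * e (real k / real Q * real n)) \<le> C" .
    qed simp
    finally show ?thesis by (simp add: Q_def)
  qed
  moreover have "real (q ^ nat \<lceil>C^2\<rceil>) > C^2"
  proof -
    define L where "L = nat \<lceil>C^2\<rceil>"
    have "L < 2^L" by (rule less_exp)
    also have "\<dots> \<le> q^L" using assms(1) by (simp add: power_mono)
    finally have "real L < real (q^L)" by (simp only: of_nat_less_iff)
    moreover have "C^2 \<le> real L" unfolding L_def by (rule real_nat_ceiling_ge)
    ultimately have "C^2 < real (q^L)" by linarith
    then show ?thesis unfolding L_def .
  qed
  ultimately show False by (meson not_le)
qed

definition weyl_sum :: "(nat \<Rightarrow> complex) \<Rightarrow> real poly \<Rightarrow> nat \<Rightarrow> nat \<Rightarrow> complex" where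
  "weyl_sum f p M N = (\<Sum>n\<in>{M..<M + N}. f n * e (poly p (real n)))"

lemma weyl_sum_add_length:
  "weyl_sum f p M (N + N') = weyl_sum f p M N + weyl_sum f p (M + N) N'"
  unfolding weyl_sum_def by (simp add: sum.atLeastLessThan_concat add.assoc)

lemma weyl_sum_eq_shifted_sum:
  "weyl_sum f p M N = (\<Sum>n<N. f (n + M) * e (poly (p \<circ>\<^sub>p [:real M, 1:]) (real n)))"
proof -
  have "weyl_sum f p M N = (\<Sum>n\<in>{0 + M..<N + M}. f n * e (poly p (real n)))"
    unfolding weyl_sum_def by (simp add: add.commute)
  also have "\<dots> = (\<Sum>n\<in>{0..<N}. f (n + M) * e (poly p (real (n + M))))"
    by (rule sum.shift_bounds_nat_ivl)
  finally show ?thesis by (simp add: poly_pcompose atLeast0LessThan add.commute)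
qed

lemma norm_weyl_sum_le_length:
  assumes "\<And>n. norm (f n) \<le> 1"
  shows "norm (weyl_sum f p M N) \<le> N"
proof -
  have "norm (weyl_sum f p M N) \<le> (\<Sum>n\<in>{M..<M + N}. norm (f n * e (poly p (real n))))"
    unfolding weyl_sum_def by (rule norm_sum)
  also have "\<dots> \<le> (\<Sum>n\<in>{M..<M + N}. 1)"
    by (intro sum_mono) (simp add: norm_mult assms)
  finally show ?thesis by simp
qed

context
  fixes q d :: nat and f :: "nat \<Rightarrow> complex" and B :: "nat \<Rightarrow> real"
  assumes q_pos: "q > 0"
    and norm_f_le: "\<And>n. norm (f n) \<le> 1"
    and q_mult: "q_multiplicative q f"
    and complete_sum_bound:
      "\<And>J p. degree p \<le> d \<Longrightarrow> norm (\<Sum>n<q^J. f n * e (poly p (real n))) \<le> B J"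
begin

lemma complete_sum_bound_nonneg: "B J \<ge> 0"
  using order_trans[OF norm_ge_zero complete_sum_bound[of 0 J]] by simp

lemma aligned_block_bound:
  assumes "q^J dvd A" and "degree p \<le> d"
  shows "norm (weyl_sum f p A (q^J)) \<le> B J"
proof -
  let ?p = "p \<circ>\<^sub>p [:real A, 1:]"
  have "weyl_sum f p A (q^J) = f A * (\<Sum>n<q^J. f n * e (poly ?p (real n)))"
    unfolding weyl_sum_eq_shifted_sum sum_distrib_left
  proof (intro sum.cong refl)
    fix n assume "n \<in> {..<q^J}"
    then have "f (n + A) = f n * f A"
      using q_mult assms(1) unfolding q_multiplicative_def by auto
    then show "f (n + A) * e (poly ?p (real n)) = f A * (f n * e (poly ?p (real n)))"
      by simp
  qed
  also have "norm \<dots> \<le> norm (\<Sum>n<q^J. f n * e (poly ?p (real n)))"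
    using norm_f_le[of A] by (simp add: norm_mult mult_left_le_one_le)
  also have "\<dots> \<le> B J"
    using assms(2) by (intro complete_sum_bound) (simp add: degree_pcompose)
  finally show ?thesis .
qed

lemma aligned_blocks_bound:
  assumes "q^J dvd A" and "degree p \<le> d"
  shows "norm (weyl_sum f p A (a * q^J)) \<le> a * B J"
proof (induction a)
  case 0 then show ?case by (simp add: weyl_sum_def)
next
  case (Suc a)
  have "q^J dvd A + a * q^J" using assms(1) by simp
  then have "norm (weyl_sum f p (A + a * q^J) (q^J)) \<le> B J"
    using assms(2) by (rule aligned_block_bound)
  moreover have "weyl_sum f p A (Suc a * q^J) = weyl_sum f p A (a * q^J) + weyl_sum f p (A + a * q^J) (q^J)"
    by (simp only: mult_Suc add.commute[of "q^J"] weyl_sum_add_length)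
  ultimately show ?case
    using Suc.IH by (simp add: algebra_simps norm_triangle_le)
qed

lemma weyl_sum_le_blocks_plus_rest:
  assumes "q^J dvd A" and "degree p \<le> d"
  shows "norm (weyl_sum f p A N)
    \<le> (N div q^J) * B J + norm (weyl_sum f p (A + N div q^J * q^J) (N mod q^J))"
proof -
  have "weyl_sum f p A N
      = weyl_sum f p A (N div q^J * q^J) + weyl_sum f p (A + N div q^J * q^J) (N mod q^J)"
    by (simp only: weyl_sum_add_length[symmetric] div_mult_mod_eq)
  then show ?thesis
    using aligned_blocks_bound[OF assms, of "N div q^J"] by (simp add: norm_triangle_le)
qed

lemma aligned_short_weyl_sum_bound:
  assumes "q^J dvd A" and "N \<le> q^J" and "degree p \<le> d"
  shows "norm (weyl_sum f p A N) \<le> 1 + q * (\<Sum>i<J. B i)"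
  using assms(1,2)
proof (induction J arbitrary: A N)
  case 0
  then show ?case using norm_weyl_sum_le_length[of f p A N, OF norm_f_le] by simp
next
  case (Suc J)
  have "q^J dvd A" using Suc.prems(1) dvd_mult_right by (metis power_Suc)
  have "N div q^J \<le> q"
    using Suc.prems(2) q_pos div_le_mono[of N "q * q^J" "q^J"] by simp
  have "norm (weyl_sum f p (A + N div q^J * q^J) (N mod q^J)) \<le> 1 + q * (\<Sum>i<J. B i)"
    using \<open>q^J dvd A\<close> q_pos by (intro Suc.IH) (simp_all add: order.strict_implies_order)
  then have "norm (weyl_sum f p A N) \<le> (N div q^J) * B J + (1 + q * (\<Sum>i<J. B i))"
    using weyl_sum_le_blocks_plus_rest[OF \<open>q^J dvd A\<close> assms(3), of N] by simp
  also have "\<dots> \<le> q * B J + (1 + q * (\<Sum>i<J. B i))"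
    using \<open>N div q^J \<le> q\<close> complete_sum_bound_nonneg by (simp add: mult_right_mono)
  finally show ?case by (simp add: algebra_simps)
qed

lemma short_weyl_sum_bound:
  assumes "N < q^Suc K" and "degree p \<le> d"
  shows "norm (weyl_sum f p M N) \<le> 2 * (1 + q * (\<Sum>i<Suc K. B i))"
proof -
  define A where "A = M - M mod q^K"
  define s where "s = M mod q^K"
  have "q^K dvd A" by (simp add: A_def minus_mod_eq_mult_div)
  have "s < q^K" using q_pos by (simp add: s_def)
  have "M = A + s" by (simp add: A_def s_def)
  then have "weyl_sum f p M N = weyl_sum f p A (s + N) - weyl_sum f p A s"
    by (simp add: weyl_sum_add_length)
  then have "norm (weyl_sum f p M N) \<le> norm (weyl_sum f p A (s + N)) + norm (weyl_sum f p A s)"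
    by (simp add: norm_triangle_ineq4)
  also have "\<dots> \<le> ((s + N) div q^K) * B K + 2 * (1 + q * (\<Sum>i<K. B i))"
  proof -
    have "norm (weyl_sum f p (A + (s + N) div q^K * q^K) ((s + N) mod q^K)) \<le> 1 + q * (\<Sum>i<K. B i)"
      using \<open>q^K dvd A\<close> q_pos assms(2)
      by (intro aligned_short_weyl_sum_bound) (simp_all add: order.strict_implies_order)
    moreover have "norm (weyl_sum f p A s) \<le> 1 + q * (\<Sum>i<K. B i)"
      using \<open>q^K dvd A\<close> \<open>s < q^K\<close> assms(2) by (intro aligned_short_weyl_sum_bound) simp_all
    ultimately show ?thesis
      using weyl_sum_le_blocks_plus_rest[OF \<open>q^K dvd A\<close> assms(2), of "s + N"] by simp
  qed
  also have "\<dots> \<le> q * B K + 2 * (1 + q * (\<Sum>i<K. B i))"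
  proof -
    have "s + N < Suc q * q^K" using \<open>s < q^K\<close> assms(1) by simp
    then have "(s + N) div q^K < Suc q" by (rule less_mult_imp_div_less)
    then show ?thesis using complete_sum_bound_nonneg by (simp add: mult_right_mono)
  qed
  also have "\<dots> \<le> 2 * (1 + q * (\<Sum>i<Suc K. B i))"
    using complete_sum_bound_nonneg[of K] by (simp add: algebra_simps)
  finally show ?thesis .
qed

end

lemma one_plus_geometric_sum_le:
  fixes C \<rho> x :: real
  assumes "C \<ge> 0" and "\<rho> > 1" and "x \<ge> 0"
  shows "1 + x * (\<Sum>i<J. C * \<rho>^i) \<le> (1 + x * C / (\<rho> - 1)) * \<rho>^J"
proof -
  have "1 \<le> \<rho>^J" using assms(2) by simp
  moreover have "x * C * (\<rho>^J - 1) \<le> x * C * \<rho>^J"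
    using assms by (simp add: mult_left_mono)
  ultimately have "1 + x * C * (\<rho>^J - 1) / (\<rho> - 1) \<le> \<rho>^J + x * C * \<rho>^J / (\<rho> - 1)"
    using assms(2) by (intro add_mono divide_right_mono) auto
  moreover have "(\<Sum>i<J. C * \<rho>^i) = C * (\<rho>^J - 1) / (\<rho> - 1)"
    using assms(2) by (simp add: sum_distrib_left[symmetric] sum_gp_strict field_simps)
  ultimately show ?thesis by (simp add: algebra_simps)
qed

lemma weyl_sum_power_saving:
  fixes f :: "nat \<Rightarrow> complex" and q d :: nat and C c :: real
  assumes "q \<ge> 2" and "c < 1" and "\<And>n. norm (f n) \<le> 1" and "q_multiplicative q f"
    and bound: "\<And>L p. degree p \<le> d \<Longrightarrow>
      norm (\<Sum>n<q^L. f n * e (poly p (real n))) \<le> C * real (q^L) powr (1 - c)"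
  shows "\<exists>D. \<forall>N M p. N \<ge> 1 \<longrightarrow> degree p \<le> d \<longrightarrow>
    norm (weyl_sum f p M N) \<le> D * real N powr (1 - c)"
proof -
  define \<rho> where "\<rho> = real q powr (1 - c)"
  have "\<rho> > 1" unfolding \<rho>_def using assms(1,2) by (intro gr_one_powr) auto
  have \<rho>_power: "\<rho>^L = real (q^L) powr (1 - c)" for L
    unfolding \<rho>_def using assms(1) by (simp add: powr_realpow[symmetric] powr_powr mult_ac)
  have "C \<ge> 0" using order_trans[OF norm_ge_zero bound[of 0 0]] by simp
  define D where "D = 2 * (1 + q * C / (\<rho> - 1)) * \<rho>"
  have "norm (weyl_sum f p M N) \<le> D * real N powr (1 - c)" if N_pos: "N \<ge> 1" and deg: "degree p \<le> d" for M N p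
  proof -
    obtain K where K: "q^K \<le> N" "N < q^Suc K" using ex_power_ivl1[OF assms(1) N_pos] by auto
    have "norm (weyl_sum f p M N) \<le> 2 * (1 + q * (\<Sum>i<Suc K. C * \<rho>^i))"
      using assms(1,3,4) bound K(2) deg
      by (intro short_weyl_sum_bound[where B = "\<lambda>J. C * \<rho>^J" and d = d]) (simp_all add: \<rho>_power)
    also have "\<dots> \<le> 2 * ((1 + q * C / (\<rho> - 1)) * \<rho>^Suc K)"
      using one_plus_geometric_sum_le[OF \<open>C \<ge> 0\<close> \<open>\<rho> > 1\<close>, of "real q" "Suc K"] by simp
    also have "\<dots> = D * \<rho>^K" by (simp add: D_def)
    also have "\<dots> \<le> D * real N powr (1 - c)"
      unfolding \<rho>_power using K(1) assms(2) \<open>C \<ge> 0\<close> \<open>\<rho> > 1\<close>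
      by (intro mult_left_mono powr_mono2) (auto simp: D_def)
    finally show ?thesis .
  qed
  then show ?thesis by blast
qed

lemma norm_average_le_iff:
  fixes z :: complex
  assumes "N > 0"
  shows "norm ((1 / of_nat N) * z) \<le> C * real N powr (- c) \<longleftrightarrow> norm z \<le> C * real N powr (1 - c)"
proof -
  have "real N powr (1 - c) = real N powr (- c) * real N"
    using assms powr_add[of "real N" "- c" 1] by simp
  then show ?thesis using assms by (simp add: norm_mult norm_divide divide_le_eq mult_ac)
qed

lemma complete_sum_bound_normalize:
  fixes q d :: nat and f :: "nat \<Rightarrow> complex" and C c :: real
  assumes "q > 0"
  shows "(\<forall>L p. degree p \<le> d \<longrightarrow>
      norm ((1 / of_nat (q^L)) * (\<Sum>n<q^L. f n * e (poly p (real n)))) \<le> C * real q powr (- c * real L))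
    \<longleftrightarrow> (\<forall>L p. degree p \<le> d \<longrightarrow>
      norm (\<Sum>n<q^L. f n * e (poly p (real n))) \<le> C * real (q^L) powr (1 - c))"
proof -
  have "real q powr (- c * real L) = real (q^L) powr (- c)" for L
    using assms by (simp add: powr_realpow[symmetric] powr_powr mult_ac)
  then have "norm ((1 / of_nat (q^L)) * z) \<le> C * real q powr (- c * real L)
      \<longleftrightarrow> norm z \<le> C * real (q^L) powr (1 - c)" for L and z :: complex
    using assms by (simp only: norm_average_le_iff zero_less_power)
  then show ?thesis by (simp only:)
qed

lemma shifted_sum_bound_normalize:
  fixes d :: nat and f :: "nat \<Rightarrow> complex" and C c :: real
  shows "(\<forall>N M p. N \<ge> 1 \<longrightarrow> degree p \<le> d \<longrightarrow>
      norm ((1 / of_nat N) * (\<Sum>n<N. f (n + M) * e (poly p (real n)))) \<le> C * real N powr (- c))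
    \<longleftrightarrow> (\<forall>N M p. N \<ge> 1 \<longrightarrow> degree p \<le> d \<longrightarrow>
      norm (weyl_sum f p M N) \<le> C * real N powr (1 - c))"
proof (intro iffI allI impI)
  fix N M :: nat and p :: "real poly"
  assume "\<forall>N M p. N \<ge> 1 \<longrightarrow> degree p \<le> d \<longrightarrow>
      norm ((1 / of_nat N) * (\<Sum>n<N. f (n + M) * e (poly p (real n)))) \<le> C * real N powr (- c)"
    and "N \<ge> 1" and "degree p \<le> d"
  then have "norm ((1 / of_nat N) * weyl_sum f p M N) \<le> C * real N powr (- c)"
    unfolding weyl_sum_eq_shifted_sum by (simp add: degree_pcompose)
  then show "norm (weyl_sum f p M N) \<le> C * real N powr (1 - c)"
    using \<open>N \<ge> 1\<close> by (simp only: norm_average_le_iff)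
next
  fix N M :: nat and p :: "real poly"
  assume "\<forall>N M p. N \<ge> 1 \<longrightarrow> degree p \<le> d \<longrightarrow>
      norm (weyl_sum f p M N) \<le> C * real N powr (1 - c)"
    and "N \<ge> 1" and "degree p \<le> d"
  then have "norm (weyl_sum f (p \<circ>\<^sub>p [:- real M, 1:]) M N) \<le> C * real N powr (1 - c)"
    by (simp add: degree_pcompose)
  moreover have "weyl_sum f (p \<circ>\<^sub>p [:- real M, 1:]) M N = (\<Sum>n<N. f (n + M) * e (poly p (real n)))"
    by (simp add: weyl_sum_eq_shifted_sum poly_pcompose)
  ultimately show "norm ((1 / of_nat N) * (\<Sum>n<N. f (n + M) * e (poly p (real n)))) \<le> C * real N powr (- c)"
    using \<open>N \<ge> 1\<close> by (simp only: norm_average_le_iff)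
qed

lemma power_saving_complete_iff_shifted:
  fixes q d :: nat and f :: "nat \<Rightarrow> complex" and c :: real
  assumes "q \<ge> 2" and "d \<ge> 1" and "\<And>n. norm (f n) = 1" and "q_multiplicative q f"
  shows "(\<exists>C. \<forall>L p. degree p \<le> d \<longrightarrow>
      norm (\<Sum>n<q^L. f n * e (poly p (real n))) \<le> C * real (q^L) powr (1 - c))
    \<longleftrightarrow> (\<exists>C. \<forall>N M p. N \<ge> 1 \<longrightarrow> degree p \<le> d \<longrightarrow>
      norm (weyl_sum f p M N) \<le> C * real N powr (1 - c))"
proof
  assume "\<exists>C. \<forall>L p. degree p \<le> d \<longrightarrow>
    norm (\<Sum>n<q^L. f n * e (poly p (real n))) \<le> C * real (q^L) powr (1 - c)"
  then obtain C where complete: "\<And>L p. degree p \<le> d \<Longrightarrow>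
      norm (\<Sum>n<q^L. f n * e (poly p (real n))) \<le> C * real (q^L) powr (1 - c)"
    by blast
  then have "c < 1" using assms(1-3) by (intro power_saving_exponent_lt_1)
  moreover have "\<And>n. norm (f n) \<le> 1" using assms(3) by simp
  ultimately show "\<exists>D. \<forall>N M p. N \<ge> 1 \<longrightarrow> degree p \<le> d \<longrightarrow>
      norm (weyl_sum f p M N) \<le> D * real N powr (1 - c)"
    using weyl_sum_power_saving[OF assms(1) _ _ assms(4) complete] by blast
next
  assume "\<exists>C. \<forall>N M p. N \<ge> 1 \<longrightarrow> degree p \<le> d \<longrightarrow>
    norm (weyl_sum f p M N) \<le> C * real N powr (1 - c)"
  then obtain C where shifted: "\<forall>N M p. N \<ge> 1 \<longrightarrow> degree p \<le> d \<longrightarrow>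
      norm (weyl_sum f p M N) \<le> C * real N powr (1 - c)"
    by blast
  have "norm (weyl_sum f p 0 (q^L)) \<le> C * real (q^L) powr (1 - c)" if "degree p \<le> d" for L p
    using shifted[rule_format, where N = "q^L" and M = 0 and p = p] that assms(1) by simp
  then show "\<exists>C. \<forall>L p. degree p \<le> d \<longrightarrow>
      norm (\<Sum>n<q^L. f n * e (poly p (real n))) \<le> C * real (q^L) powr (1 - c)"
    by (auto simp: weyl_sum_def atLeast0LessThan)
qed

theorem lemmaA1:
  fixes q d :: nat and f :: "nat \<Rightarrow> complex" and c :: real
  assumes "q \<ge> 2" and "d \<ge> 1"
    and "\<And>n. norm (f n) = 1"
    and "q_multiplicative q f"
    and "c > 0"
  shows "(\<exists>C. \<forall>L::nat. \<forall>p::real poly. degree p \<le> d \<longrightarrow>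
            norm ((1 / of_nat (q ^ L)) * (\<Sum>n<q ^ L. f n * e (poly p (real n))))
              \<le> C * real q powr (- c * real L))
     \<longleftrightarrow>
         (\<exists>C. \<forall>N::nat. \<forall>M::nat. \<forall>p::real poly. N \<ge> 1 \<longrightarrow> degree p \<le> d \<longrightarrow>
            norm ((1 / of_nat N) * (\<Sum>n<N. f (n + M) * e (poly p (real n))))
              \<le> C * real N powr (- c))"
proof -
  have "q > 0" using assms(1) by simp
  then show ?thesis
    by (simp only: complete_sum_bound_normalize shifted_sum_bound_normalize
        power_saving_complete_iff_shifted[OF assms(1-4)])
qed

end
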